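(* Let $\hat{r}^{\mathsf{mom}}_n$ be the median-of-means estimate of the regression function $r$ constructed on $m$ blocks with an arbitrary base estimate $\hat{r}_N$. Then for all $x\in\mathbb{R}^d$ and all $t\geq 0$, \[ \mathbb{P}\left(\left|\hat{r}^{\mathsf{mom}}_n(x)-r(x)\right|\geq t\right)\leq 2^m\, p_t(x)^{m/2}, \qquad\text{where } p_t(x):=\mathbb{P}\left(\left|\hat{r}_N(x)-r(x)\right|\geq t\right), \] and $\hat{r}_N(x)=\hat{r}_N(x,\mathcal{D}_N)$ denotes the base estimate computed on an i.i.d. sample $\mathcal{D}_N$ of size $N$ with the law of $(X,Y)$.
   Context: Let $(X,Y)$ be a random pair with $X\in\mathbb{R}^d$ ($d\geq1$) of law $\mu$ and $Y$ real-valued with $\mathbb{E}[Y^2]<\infty$; the regression function is $r(x)=\mathbb{E}[Y\mid X=x]$. Let $\mathcal{D}_n=((X_1,Y_1),\dots,(X_n,Y_n))$ be i.i.d. copies of $(X,Y)$. For $m\in\{1,\dots,n\}$, let $N=\lfloor n/m\rfloor$ and let $\mathcal{D}^{(1)},\dots,\mathcal{D}^{(m)}$ be $m$ disjoint subsets of $\mathcal{D}_n$, each consisting of $N$ observations (remaining observations are discarded). A base estimate is a map $\hat{r}_N(x,\cdot)$ taking a sample of size $N$ and returning a real number; set $\hat{r}^{(j)}(x)=\hat{r}_N(x,\mathcal{D}^{(j)})$. The median-of-means estimate is $\hat{r}^{\mathsf{mom}}_n(x)=\mathsf{median}(\hat{r}^{(1)}(x),\dots,\hat{r}^{(m)}(x))$,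 where $\mathsf{median}(r_1,\dots,r_m)=r_{(\lceil m/2\rceil)}$ is the $\lceil m/2\rceil$-th smallest of the values. *)

theory Defs
  imports "HOL-Probability.Probability"
begin

text \<open>median(r_1,...,r_m) = the ceil(m/2)-th smallest value (1-based).
  Note ceil(m/2) = (m+1) div 2 for natural m.\<close>
definition median_list :: "real list \<Rightarrow> real" where
  "median_list rs = sort rs ! ((length rs + 1) div 2 - 1)"

text \<open>Median-of-means estimate at x on outcome \<omega>: block j consists of the
  observations Dn (\<sigma> j 0), ..., Dn (\<sigma> j (N-1)), N = n div m.\<close>
definition mom_estimate ::
  "('d \<Rightarrow> (nat \<Rightarrow> 'z) \<Rightarrow> real) \<Rightarrow> nat \<Rightarrow> nat \<Rightarrow> (nat \<Rightarrow> nat \<Rightarrow> nat)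
     \<Rightarrow> (nat \<Rightarrow> 'a \<Rightarrow> 'z) \<Rightarrow> 'd \<Rightarrow> 'a \<Rightarrow> real" where
  "mom_estimate est n m \<sigma> Dn x \<omega> =
     median_list (map (\<lambda>j. est x (restrict (\<lambda>i. Dn (\<sigma> j i) \<omega>) {..<n div m})) [0..<m])"

end

theory Submission
  imports Defs
begin

text \<open>If the median of the \<open>m\<close> block estimates is at distance at least \<open>t\<close> from \<open>r x\<close>,
  then so are at least \<open>\<lceil>m/2\<rceil>\<close> of the block estimates, because the median has
  \<open>\<lceil>m/2\<rceil>\<close> of the values on each side. The blocks are disjoint sets of i.i.d.
  observations, so the block estimates are independent, each distributed as the base estimate
  on a sample of size \<open>N\<close>. A union bound over the \<open>m choose \<lceil>m/2\<rceil> \<le> 2^m\<close> possible sets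
  of bad blocks gives \<open>2^m p\<^sub>t(x)^\<lceil>m/2\<rceil> \<le> 2^m p\<^sub>t(x)^(m/2)\<close>.\<close>

lemma median_list_dist_ge_imp_length_filter:
  fixes rs :: "real list" and a t :: real
  assumes "rs \<noteq> []" and "t \<le> \<bar>median_list rs - a\<bar>"
  shows "(length rs + 1) div 2 \<le> length (filter (\<lambda>v. t \<le> \<bar>v - a\<bar>) rs)"
proof -
  define xs where "xs = sort rs"
  define k where "k = (length rs + 1) div 2"
  let ?far = "{i. i < length xs \<and> t \<le> \<bar>xs ! i - a\<bar>}"
  have len: "length xs = length rs" and sorted: "sorted xs"
    by (simp_all add: xs_def)
  have "0 < length rs" using assms(1) by simp
  then have k: "1 \<le> k" "k \<le> length rs" "2 * k \<le> length rs + 1"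
    unfolding k_def by presburger+
  have med: "median_list rs = xs ! (k - 1)"
    by (simp add: median_list_def xs_def k_def)
  have "length (filter (\<lambda>v. t \<le> \<bar>v - a\<bar>) rs) = length (filter (\<lambda>v. t \<le> \<bar>v - a\<bar>) xs)"
    by (simp add: xs_def filter_sort)
  then have count: "length (filter (\<lambda>v. t \<le> \<bar>v - a\<bar>) rs) = card ?far"
    by (simp add: length_filter_conv_card)
  consider "a + t \<le> median_list rs" | "median_list rs \<le> a - t"
    using assms(2) by linarith
  then show ?thesis
  proof cases
    case 1
    have "{k - 1..<length xs} \<subseteq> ?far"
    proof
      fix i assume i: "i \<in> {k - 1..<length xs}"
      then have "xs ! (k - 1) \<le> xs ! i" using sorted by (intro sorted_nth_mono) auto
      then show "i \<in> ?far" using i 1 med by auto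
    qed
    then have "card {k - 1..<length xs} \<le> card ?far" by (intro card_mono) auto
    then show ?thesis using count len k by (simp add: k_def)
  next
    case 2
    have "{..<k} \<subseteq> ?far"
    proof
      fix i assume i: "i \<in> {..<k}"
      then have "xs ! i \<le> xs ! (k - 1)" using sorted len k by (intro sorted_nth_mono) auto
      then show "i \<in> ?far" using i 2 med len k by auto
    qed
    then have "card {..<k} \<le> card ?far" by (intro card_mono) auto
    then show ?thesis using count by (simp add: k_def)
  qed
qed

lemma power_le_powr_of_le:
  fixes p a :: real
  assumes "0 \<le> p" "p \<le> 1" "0 < k" "a \<le> real k"
  shows "p ^ k \<le> p powr a"
proof (cases "p = 0")
  case True
  then show ?thesis using assms(3) by (simp add: power_0_left)
next
  case False
  then have "p ^ k = p powr real k" using assms(1) by (simp add: powr_realpow)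
  also have "\<dots> \<le> p powr a" using assms by (intro powr_mono') auto
  finally show ?thesis .
qed

lemma (in prob_space) prob_at_least_k_indep_events_le:
  assumes indep: "indep_events B I" and "finite I"
    and prob_B: "\<And>i. i \<in> I \<Longrightarrow> prob (B i) = p" and "0 < k"
    and E: "E \<subseteq> {\<omega> \<in> space M. k \<le> card {i \<in> I. \<omega> \<in> B i}}"
  shows "prob E \<le> real (card I choose k) * p ^ k"
proof -
  define SS where "SS = {S. S \<subseteq> I \<and> card S = k}"
  have SS: "S \<subseteq> I" "S \<noteq> {}" "finite S" if "S \<in> SS" for S
    using that \<open>0 < k\<close> \<open>finite I\<close> by (auto simp: SS_def intro: finite_subset)
  have "finite SS" using \<open>finite I\<close> by (simp add: SS_def)
  have B: "B i \<in> events" if "i \<in> I" for i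
    using indep that by (auto simp: indep_events_def)
  have events: "(\<lambda>S. \<Inter>i\<in>S. B i) ` SS \<subseteq> events"
  proof safe
    fix S assume "S \<in> SS"
    with SS[OF this] show "(\<Inter>i\<in>S. B i) \<in> events"
      by (intro sets.finite_INT) (auto intro: B)
  qed
  have "E \<subseteq> (\<Union>S\<in>SS. \<Inter>i\<in>S. B i)"
  proof
    fix \<omega> assume "\<omega> \<in> E"
    then have "k \<le> card {i \<in> I. \<omega> \<in> B i}" using E by auto
    then obtain S where "S \<subseteq> {i \<in> I. \<omega> \<in> B i}" "card S = k"
      by (meson obtain_subset_with_card_n)
    then show "\<omega> \<in> (\<Union>S\<in>SS. \<Inter>i\<in>S. B i)" by (auto simp: SS_def)
  qed
  then have "prob E \<le> prob (\<Union>S\<in>SS. \<Inter>i\<in>S. B i)"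
    using events \<open>finite SS\<close> by (intro finite_measure_mono) auto
  also have "\<dots> \<le> (\<Sum>S\<in>SS. prob (\<Inter>i\<in>S. B i))"
    by (rule finite_measure_subadditive_finite[OF \<open>finite SS\<close> events])
  also have "\<dots> = (\<Sum>S\<in>SS. p ^ k)"
  proof (rule sum.cong)
    fix S assume "S \<in> SS"
    then have "prob (\<Inter>i\<in>S. B i) = (\<Prod>i\<in>S. prob (B i))"
      using indep SS by (auto simp: indep_events_def)
    also have "\<dots> = (\<Prod>i\<in>S. p)"
      using SS(1)[OF \<open>S \<in> SS\<close>] prob_B by (intro prod.cong) auto
    also have "\<dots> = p ^ k"
      using \<open>S \<in> SS\<close> by (simp add: SS_def)
    finally show "prob (\<Inter>i\<in>S. B i) = p ^ k" .
  qed simp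
  also have "\<dots> = real (card I choose k) * p ^ k"
    using \<open>finite I\<close> by (simp add: SS_def n_subsets)
  finally show ?thesis .
qed

lemma (in prob_space) indep_vars_reindexed_blocks:
  assumes "indep_vars (\<lambda>_. N) Z I"
    and "\<And>j. j \<in> K \<Longrightarrow> \<sigma> j \<in> J \<rightarrow> I" and "inj_on (\<lambda>(j, i). \<sigma> j i) (K \<times> J)"
  shows "indep_vars (\<lambda>_. PiM J (\<lambda>_. N)) (\<lambda>j \<omega>. \<lambda>i\<in>J. Z (\<sigma> j i) \<omega>) K"
proof -
  define L where "L j = \<sigma> j ` J" for j
  have "indep_vars (\<lambda>j. PiM (L j) (\<lambda>_. N)) (\<lambda>j \<omega>. \<lambda>i\<in>L j. Z i \<omega>) K"
  proof (rule indep_vars_restrict[OF assms(1)])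
    show "L j \<subseteq> I" if "j \<in> K" for j using assms(2) that by (auto simp: L_def)
    show "disjoint_family_on L K"
      using assms(3) unfolding disjoint_family_on_def L_def inj_on_def by fastforce
  qed
  then have "indep_vars (\<lambda>_. PiM J (\<lambda>_. N))
      (\<lambda>j \<omega>. (\<lambda>f. \<lambda>i\<in>J. f (\<sigma> j i)) (\<lambda>i\<in>L j. Z i \<omega>)) K"
    by (rule indep_vars_compose2)
       (unfold L_def, intro measurable_restrict measurable_component_singleton, auto)
  moreover have "(\<lambda>f. \<lambda>i\<in>J. f (\<sigma> j i)) (\<lambda>i\<in>L j. Z i \<omega>) = (\<lambda>i\<in>J. Z (\<sigma> j i) \<omega>)" for j \<omega>
    by (auto simp: L_def fun_eq_iff)
  ultimately show ?thesis by simp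
qed

lemma (in prob_space) distr_reindexed_iid_vars:
  assumes indep: "indep_vars (\<lambda>_. N) Z I"
    and distr_Z: "\<And>i. i \<in> I \<Longrightarrow> distr M N (Z i) = P"
    and "inj_on f J" "f \<in> J \<rightarrow> I" "J \<noteq> {}"
  shows "distr M (PiM J (\<lambda>_. N)) (\<lambda>\<omega>. \<lambda>j\<in>J. Z (f j) \<omega>) = PiM J (\<lambda>_. P)"
proof -
  obtain i0 where "i0 \<in> I" using assms(4,5) by blast
  have rv: "\<And>i. i \<in> I \<Longrightarrow> random_variable N (Z i)"
    using indep by (simp add: indep_vars_def)
  have P: "prob_space P" "sets P = sets N"
    using distr_Z[OF \<open>i0 \<in> I\<close>] rv[OF \<open>i0 \<in> I\<close>] by (auto intro: prob_space_distr)
  have g: "(\<lambda>\<omega>. \<lambda>j\<in>J. \<omega> (f j)) \<in> measurable (PiM I (\<lambda>_. N)) (PiM J (\<lambda>_. N))"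
    using assms(4) by (intro measurable_restrict measurable_component_singleton) auto
  have "distr M (PiM I (\<lambda>_. N)) (\<lambda>\<omega>. \<lambda>i\<in>I. Z i \<omega>) = PiM I (\<lambda>i. distr M N (Z i))"
    using indep indep_vars_iff_distr_eq_PiM'[where I=I and X=Z and M'="\<lambda>_. N"] rv \<open>i0 \<in> I\<close>
    by blast
  also have "\<dots> = PiM I (\<lambda>_. P)" by (intro PiM_cong) (auto simp: distr_Z)
  finally have joint: "distr M (PiM I (\<lambda>_. N)) (\<lambda>\<omega>. \<lambda>i\<in>I. Z i \<omega>) = PiM I (\<lambda>_. P)" .
  have "distr M (PiM J (\<lambda>_. N)) (\<lambda>\<omega>. \<lambda>j\<in>J. Z (f j) \<omega>)
      = distr M (PiM J (\<lambda>_. N)) ((\<lambda>\<omega>. \<lambda>j\<in>J. \<omega> (f j)) \<circ> (\<lambda>\<omega>. \<lambda>i\<in>I. Z i \<omega>))"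
    using assms(4) by (intro distr_cong) (auto simp: fun_eq_iff)
  also have "\<dots> = distr (PiM I (\<lambda>_. P)) (PiM J (\<lambda>_. N)) (\<lambda>\<omega>. \<lambda>j\<in>J. \<omega> (f j))"
    using rv by (subst distr_distr[symmetric, OF g]) (auto simp: joint intro!: measurable_restrict)
  also have "\<dots> = distr (PiM I (\<lambda>_. P)) (PiM J (\<lambda>_. P)) (\<lambda>\<omega>. \<lambda>j\<in>J. \<omega> (f j))"
    using P by (intro distr_cong sets_PiM_cong) auto
  also have "\<dots> = PiM J (\<lambda>_. P)"
    using distr_PiM_reindex[of I "\<lambda>_. P" f J] P assms(3,4) by simp
  finally show ?thesis .
qed

lemma (in prob_space) indep_events_iid_blocks:
  assumes indep: "indep_vars (\<lambda>_. N) Z I"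
    and distr_Z: "\<And>i. i \<in> I \<Longrightarrow> distr M N (Z i) = P"
    and \<sigma>: "\<And>j. j \<in> K \<Longrightarrow> \<sigma> j \<in> J \<rightarrow> I" and inj: "inj_on (\<lambda>(j, i). \<sigma> j i) (K \<times> J)"
    and "J \<noteq> {}"
    and \<Phi>: "{D \<in> space (PiM J (\<lambda>_. P)). \<Phi> D} \<in> sets (PiM J (\<lambda>_. P))"
  shows "indep_events (\<lambda>j. {\<omega> \<in> space M. \<Phi> (\<lambda>i\<in>J. Z (\<sigma> j i) \<omega>)}) K"
    and "j \<in> K \<Longrightarrow> prob {\<omega> \<in> space M. \<Phi> (\<lambda>i\<in>J. Z (\<sigma> j i) \<omega>)}
                    = measure (PiM J (\<lambda>_. P)) {D \<in> space (PiM J (\<lambda>_. P)). \<Phi> D}"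
proof -
  have blocks: "indep_vars (\<lambda>_. PiM J (\<lambda>_. N)) (\<lambda>j \<omega>. \<lambda>i\<in>J. Z (\<sigma> j i) \<omega>) K"
    using indep \<sigma> inj by (rule indep_vars_reindexed_blocks)
  have sets_PiM: "sets (PiM J (\<lambda>_. P)) = sets (PiM J (\<lambda>_. N))" if j: "j \<in> K" for j
  proof -
    obtain i where "i \<in> I" using \<sigma>[OF j] \<open>J \<noteq> {}\<close> by blast
    then have "sets P = sets N" using distr_Z by force
    then show ?thesis by (intro sets_PiM_cong) auto
  qed
  then have \<Phi>_N: "{D \<in> space (PiM J (\<lambda>_. N)). \<Phi> D} \<in> sets (PiM J (\<lambda>_. N))" if "j \<in> K" for j
    using \<Phi> sets_eq_imp_space_eq[OF sets_PiM[OF that]] that by metis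
  show "indep_events (\<lambda>j. {\<omega> \<in> space M. \<Phi> (\<lambda>i\<in>J. Z (\<sigma> j i) \<omega>)}) K"
    using blocks \<Phi>_N by (rule indep_eventsI_indep_vars)
  assume "j \<in> K"
  have block: "(\<lambda>\<omega>. \<lambda>i\<in>J. Z (\<sigma> j i) \<omega>) \<in> measurable M (PiM J (\<lambda>_. N))"
    using blocks \<open>j \<in> K\<close> by (simp add: indep_vars_def)
  have "prob {\<omega> \<in> space M. \<Phi> (\<lambda>i\<in>J. Z (\<sigma> j i) \<omega>)}
      = prob ((\<lambda>\<omega>. \<lambda>i\<in>J. Z (\<sigma> j i) \<omega>) -` {D \<in> space (PiM J (\<lambda>_. N)). \<Phi> D} \<inter> space M)"
    by (rule arg_cong[where f=prob]) (auto dest: measurable_space[OF block])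
  also have "\<dots> = measure (distr M (PiM J (\<lambda>_. N)) (\<lambda>\<omega>. \<lambda>i\<in>J. Z (\<sigma> j i) \<omega>))
                     {D \<in> space (PiM J (\<lambda>_. N)). \<Phi> D}"
    by (rule measure_distr[OF block \<Phi>_N[OF \<open>j \<in> K\<close>], symmetric])
  also have "distr M (PiM J (\<lambda>_. N)) (\<lambda>\<omega>. \<lambda>i\<in>J. Z (\<sigma> j i) \<omega>) = PiM J (\<lambda>_. P)"
    using indep distr_Z \<sigma>[OF \<open>j \<in> K\<close>] \<open>J \<noteq> {}\<close> inj \<open>j \<in> K\<close>
    by (intro distr_reindexed_iid_vars) (auto simp: inj_on_def)
  also have "{D \<in> space (PiM J (\<lambda>_. N)). \<Phi> D} = {D \<in> space (PiM J (\<lambda>_. P)). \<Phi> D}"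
    using sets_eq_imp_space_eq[OF sets_PiM[OF \<open>j \<in> K\<close>]] by simp
  finally show "prob {\<omega> \<in> space M. \<Phi> (\<lambda>i\<in>J. Z (\<sigma> j i) \<omega>)}
      = measure (PiM J (\<lambda>_. P)) {D \<in> space (PiM J (\<lambda>_. P)). \<Phi> D}" .
qed

lemma mom_estimate_dist_ge_imp_card_blocks:
  assumes "1 \<le> m" and "t \<le> \<bar>mom_estimate est n m \<sigma> Dn x \<omega> - a\<bar>"
  shows "(m + 1) div 2 \<le> card {j \<in> {..<m}. t \<le> \<bar>est x (\<lambda>i\<in>{..<n div m}. Dn (\<sigma> j i) \<omega>) - a\<bar>}"
proof -
  define rs where "rs = map (\<lambda>j. est x (\<lambda>i\<in>{..<n div m}. Dn (\<sigma> j i) \<omega>)) [0..<m]"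
  have "(m + 1) div 2 \<le> length (filter (\<lambda>v. t \<le> \<bar>v - a\<bar>) rs)"
    using median_list_dist_ge_imp_length_filter[of rs t a] assms by (simp add: rs_def mom_estimate_def)
  also have "\<dots> = card {j \<in> {..<m}. t \<le> \<bar>est x (\<lambda>i\<in>{..<n div m}. Dn (\<sigma> j i) \<omega>) - a\<bar>}"
    unfolding rs_def length_filter_conv_card
    by (intro arg_cong[where f=card]) (auto simp del: upt_Suc)
  finally show ?thesis .
qed

lemma binomial_half_mul_power_le:
  fixes p :: real
  assumes "0 \<le> p" "p \<le> 1" "1 \<le> m"
  shows "real (m choose ((m + 1) div 2)) * p ^ ((m + 1) div 2) \<le> 2 ^ m * p powr (real m / 2)"
proof (rule mult_mono)
  show "real (m choose ((m + 1) div 2)) \<le> 2 ^ m"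
    using binomial_le_pow2 by (metis of_nat_le_iff of_nat_numeral of_nat_power)
  show "p ^ ((m + 1) div 2) \<le> p powr (real m / 2)"
    using assms by (intro power_le_powr_of_le) auto
qed (use assms in auto)

theorem lemma2p1:
  fixes M :: "'a measure"
    and X :: "'a \<Rightarrow> 'd::euclidean_space" and Y :: "'a \<Rightarrow> real"
    and r :: "'d \<Rightarrow> real"
    and Dn :: "nat \<Rightarrow> 'a \<Rightarrow> 'd \<times> real"
    and est :: "'d \<Rightarrow> (nat \<Rightarrow> 'd \<times> real) \<Rightarrow> real"
    and n m :: nat and \<sigma> :: "nat \<Rightarrow> nat \<Rightarrow> nat"
    and x :: 'd and t :: real
  assumes "prob_space M"
    and "X \<in> borel_measurable M" and "Y \<in> borel_measurable M"
    and "integrable M (\<lambda>\<omega>. (Y \<omega>)\<^sup>2)"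
    and "r \<in> borel_measurable borel"
    and "AE \<omega> in M. r (X \<omega>) = real_cond_exp M (vimage_algebra (space M) X borel) Y \<omega>"
    and "\<And>i. i < n \<Longrightarrow> Dn i \<in> borel_measurable M"
    and "prob_space.indep_vars M (\<lambda>_. borel) Dn {..<n}"
    and "\<And>i. i < n \<Longrightarrow> distr M borel (Dn i) = distr M borel (\<lambda>\<omega>. (X \<omega>, Y \<omega>))"
    and "1 \<le> m" and "m \<le> n"
    and "\<And>j i. j < m \<Longrightarrow> i < n div m \<Longrightarrow> \<sigma> j i < n"
    and "inj_on (\<lambda>(j, i). \<sigma> j i) ({..<m} \<times> {..<n div m})"
    and "\<And>z. (\<lambda>D. est z D) \<in> borel_measurable
               (PiM {..<n div m} (\<lambda>_. distr M borel (\<lambda>\<omega>. (X \<omega>, Y \<omega>))))"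
    and "0 \<le> t"
  shows "measure M {\<omega> \<in> space M. \<bar>mom_estimate est n m \<sigma> Dn x \<omega> - r x\<bar> \<ge> t}
     \<le> 2 ^ m * (measure (PiM {..<n div m} (\<lambda>_. distr M borel (\<lambda>\<omega>. (X \<omega>, Y \<omega>))))
                  {D \<in> space (PiM {..<n div m} (\<lambda>_. distr M borel (\<lambda>\<omega>. (X \<omega>, Y \<omega>)))).
                     \<bar>est x D - r x\<bar> \<ge> t}) powr (real m / 2)"
proof -
  interpret prob_space M by fact
  define P where "P = distr M borel (\<lambda>\<omega>. (X \<omega>, Y \<omega>))"
  define far where "far D \<longleftrightarrow> t \<le> \<bar>est x D - r x\<bar>" for D
  define p where "p = measure (PiM {..<n div m} (\<lambda>_. P)) {D \<in> space (PiM {..<n div m} (\<lambda>_. P)). far D}"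
  define B where "B j = {\<omega> \<in> space M. far (\<lambda>i\<in>{..<n div m}. Dn (\<sigma> j i) \<omega>)}" for j
  have far: "{D \<in> space (PiM {..<n div m} (\<lambda>_. P)). far D} \<in> sets (PiM {..<n div m} (\<lambda>_. P))"
    using assms(14)[of x] unfolding far_def P_def by measurable
  have distr_Dn: "\<And>i. i \<in> {..<n} \<Longrightarrow> distr M borel (Dn i) = P"
    using assms(9) by (simp add: P_def)
  have \<sigma>: "\<And>j. j \<in> {..<m} \<Longrightarrow> \<sigma> j \<in> {..<n div m} \<rightarrow> {..<n}"
    using assms(12) by auto
  have "{..<n div m} \<noteq> {}"
    using assms(10,11) by (simp add: lessThan_empty_iff div_eq_0_iff)
  note iid_blocks = indep_events_iid_blocks[OF assms(8) distr_Dn \<sigma> assms(13) this far]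
  have "indep_events B {..<m}"
    unfolding B_def by (rule iid_blocks(1))
  moreover have "\<And>j. j \<in> {..<m} \<Longrightarrow> prob (B j) = p"
    unfolding B_def p_def by (rule iid_blocks(2))
  moreover have "{\<omega> \<in> space M. t \<le> \<bar>mom_estimate est n m \<sigma> Dn x \<omega> - r x\<bar>}
      \<subseteq> {\<omega> \<in> space M. (m + 1) div 2 \<le> card {j \<in> {..<m}. \<omega> \<in> B j}}"
    using mom_estimate_dist_ge_imp_card_blocks[OF assms(10)] by (auto simp: B_def far_def)
  ultimately have "measure M {\<omega> \<in> space M. t \<le> \<bar>mom_estimate est n m \<sigma> Dn x \<omega> - r x\<bar>}
      \<le> real (m choose ((m + 1) div 2)) * p ^ ((m + 1) div 2)"
    using prob_at_least_k_indep_events_le[of B "{..<m}" p "(m + 1) div 2"] assms(10) by simp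
  also have "\<dots> \<le> 2 ^ m * p powr (real m / 2)"
  proof (rule binomial_half_mul_power_le)
    have "prob_space (PiM {..<n div m} (\<lambda>_. P))"
      unfolding P_def by (intro prob_space_PiM prob_space_distr) (use assms(2,3) in measurable)
    then show "0 \<le> p" "p \<le> 1" by (simp_all add: p_def prob_space.prob_le_1)
  qed (use assms(10) in simp)
  finally show ?thesis by (simp only: p_def P_def far_def)
qed

end
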